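(* Let $s_1\in\mathbb{Q}$ with $0<s_1<1$ and put $u_1=\frac{1-s_1^2}{2s_1}$. Let $m\in\mathbb{Q}$ with $0<m<\sqrt2-1$, and let $\alpha\in(0,\pi/4)$ be the angle with generator $m$, so that $\cos\alpha=\frac{1-m^2}{1+m^2}$ and $\sin\alpha=\frac{2m}{1+m^2}$. Write $\omega_\pm=\omega_\pm(\alpha)=\cos\alpha\pm\sin\alpha$. (a) For nonzero real numbers $s_2,s_3,s_4$, with $Q=s_3s_4$, the system $$s_2s_3=\omega_-,\qquad s_2s_3=Q\,\omega_+,\qquad s_2\,\omega_+=2u_1\,\omega_-+s_4$$ holds if and only if $$s_2=2u_1\cot(2\alpha),\qquad s_3=\frac{\omega_-}{s_2},\qquad s_4=\frac{s_2}{\omega_+}.$$ (b) Let $s_2,s_3,s_4$ be given by these formulas, and suppose $0<s_k<1$ for $k=2,3,4$. Put $u_k=\frac{1-s_k^2}{2s_k}$ and $v_k=\frac{1+s_k^2}{2s_k}$ for $k=1,2,3,4$. Then all $u_k,v_k$ are positive rational numbers satisfying $$1+u_k^2=v_k^2\ (k=1,2,3,4),\qquad 2u_1^2+2u_2^2=u_3^2+u_4^2 .$$ Consequently, writing $x$ for a common denominator and $y=xu_1$, $z=xu_2$, $c_1=xu_3$, $c_2=xu_4$, $a=xv_1$, $b=xv_2$, $d_1=xv_3$, $d_2=xv_4$, the numbers satisfy $x^2+y^2=a^2$, $x^2+z^2=b^2$, $x^2+c_1^2=d_1^2$, $x^2+c_2^2=d_2^2$, $2y^2+2z^2=c_1^2+c_2^2$,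 i.e. they form a rational (after scaling, perfect) leaning box.
   Context: The generator of an angle $\theta$ is $m(\theta)=\frac{\sin\theta}{1+\cos\theta}=\tan(\theta/2)$. A leaning box is a parallelepiped with edges $x,y,z$ whose faces spanned by $(x,y)$ and $(x,z)$ are rectangles (diagonals $a$, $b$) and whose face spanned by $(y,z)$ is a parallelogram with diagonals $c_1,c_2$; its two distinct body diagonals are $d_1,d_2$. It is perfect if all nine quantities are positive integers. *)

theory Defs
  imports Complex_Main
begin

text \<open>Generator of an angle: m(theta) = sin theta / (1 + cos theta) = tan(theta/2).\<close>
definition generator :: "real \<Rightarrow> real" where
  "generator \<theta> = sin \<theta> / (1 + cos \<theta>)"

definition omega_p :: "real \<Rightarrow> real" where
  "omega_p \<alpha> = cos \<alpha> + sin \<alpha>"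

definition omega_m :: "real \<Rightarrow> real" where
  "omega_m \<alpha> = cos \<alpha> - sin \<alpha>"

definition uf :: "real \<Rightarrow> real" where
  "uf s = (1 - s^2) / (2 * s)"

definition vf :: "real \<Rightarrow> real" where
  "vf s = (1 + s^2) / (2 * s)"

end

theory Submission imports Defs begin

text \<open>
  Since \<open>m = tan(\<alpha>/2)\<close> is rational, so are \<open>cos \<alpha>\<close> and \<open>sin \<alpha>\<close>, hence all of
  \<open>s\<^sub>2, s\<^sub>3, s\<^sub>4\<close>. The system is solved by eliminating \<open>s\<^sub>4 = s\<^sub>2 / \<omega>\<^sub>+\<close>: the third
  equation becomes \<open>s\<^sub>2 (\<omega>\<^sub>+\<^sup>2 - 1) = 2 u\<^sub>1 \<omega>\<^sub>- \<omega>\<^sub>+\<close>, i.e. \<open>s\<^sub>2 sin 2\<alpha> = 2 u\<^sub>1 cos 2\<alpha>\<close>.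
  Together with \<open>\<omega>\<^sub>+\<^sup>2 + \<omega>\<^sub>-\<^sup>2 = 2\<close> this relation makes the face identity
  \<open>2u\<^sub>1\<^sup>2 + 2u\<^sub>2\<^sup>2 = u\<^sub>3\<^sup>2 + u\<^sub>4\<^sup>2\<close> a polynomial identity. Each \<open>s \<in> (0,1)\<close> gives the
  rational Pythagorean triple \<open>(1, u(s), v(s))\<close>, and clearing denominators yields the box.
\<close>

lemma Rats_common_denominator:
  fixes A :: "real set"
  assumes "finite A" and "A \<subseteq> \<rat>"
  shows "\<exists>d::nat. 0 < d \<and> (\<forall>q\<in>A. real d * q \<in> \<int>)"
  using assms
proof (induction A rule: finite_induct)
  case empty
  show ?case by (intro exI[of _ 1]) auto
next
  case (insert q A)
  then obtain d :: nat where d: "0 < d" "\<forall>r\<in>A. real d * r \<in> \<int>" by auto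
  from insert.prems obtain a b :: int where ab: "0 < b" "q = of_int a / of_int b"
    by (auto elim: Rats_cases')
  have "real (d * nat b) * q = of_int (int d * a)" using ab by (simp add: field_simps)
  moreover have "real (d * nat b) * r \<in> \<int>" if "r \<in> A" for r
  proof -
    have "real (d * nat b) * r = of_int b * (real d * r)" using ab by simp
    then show ?thesis using d that by (metis Ints_mult Ints_of_int)
  qed
  ultimately show ?case using d ab by (intro exI[of _ "d * nat b"]) auto
qed

lemma uf_Rats: "s \<in> \<rat> \<Longrightarrow> uf s \<in> \<rat>"
  by (simp add: uf_def)

lemma vf_Rats: "s \<in> \<rat> \<Longrightarrow> vf s \<in> \<rat>"
  by (simp add: vf_def)

lemma uf_pos:
  assumes "0 < s" and "s < 1"
  shows "0 < uf s"
proof -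
  have "s^2 < 1" using assms by (simp add: power_less_one_iff)
  then show ?thesis using assms by (simp add: uf_def)
qed

lemma vf_pos: "0 < s \<Longrightarrow> 0 < vf s"
  by (simp add: vf_def add_pos_nonneg)

lemma one_plus_uf_squared: "s \<noteq> 0 \<Longrightarrow> 1 + (uf s)^2 = (vf s)^2"
  by (simp add: uf_def vf_def field_simps power2_eq_square)

lemma cos_eq_generator:
  assumes "1 + cos \<theta> \<noteq> 0"
  shows "cos \<theta> = (1 - (generator \<theta>)^2) / (1 + (generator \<theta>)^2)"
proof -
  define m where "m = generator \<theta>"
  have "m * (1 + cos \<theta>) = sin \<theta>" using assms by (simp add: m_def generator_def)
  then have "m^2 * (1 + cos \<theta>)^2 = (sin \<theta>)^2" by (metis power_mult_distrib)
  also have "\<dots> = (1 - cos \<theta>) * (1 + cos \<theta>)" by (simp add: sin_squared_eq power2_eq_square algebra_simps)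
  finally have "(m^2 * (1 + cos \<theta>)) * (1 + cos \<theta>) = (1 - cos \<theta>) * (1 + cos \<theta>)"
    by (simp add: power2_eq_square mult.assoc)
  then have "m^2 * (1 + cos \<theta>) = 1 - cos \<theta>" using assms by simp
  then have "cos \<theta> * (1 + m^2) = 1 - m^2" by (simp add: algebra_simps)
  moreover have "0 < 1 + m^2" by (simp add: add_pos_nonneg)
  ultimately show ?thesis by (simp add: m_def field_simps)
qed

lemma cos_sin_Rats_of_generator:
  assumes "generator \<theta> \<in> \<rat>" and "1 + cos \<theta> \<noteq> 0"
  shows "cos \<theta> \<in> \<rat>" and "sin \<theta> \<in> \<rat>"
proof -
  show cos_rat: "cos \<theta> \<in> \<rat>" using assms by (subst cos_eq_generator) simp_all
  have "sin \<theta> = generator \<theta> * (1 + cos \<theta>)" using assms(2) by (simp add: generator_def)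
  then show "sin \<theta> \<in> \<rat>" using assms(1) cos_rat by simp
qed

lemma omega_p_squared: "(omega_p \<alpha>)^2 = 1 + sin (2 * \<alpha>)"
  unfolding omega_p_def sin_double power2_sum by simp

lemma omega_m_squared: "(omega_m \<alpha>)^2 = 1 - sin (2 * \<alpha>)"
  unfolding omega_m_def sin_double power2_diff by simp

lemma omega_m_mult_omega_p: "omega_m \<alpha> * omega_p \<alpha> = cos (2 * \<alpha>)"
  unfolding omega_m_def omega_p_def cos_double by (simp add: power2_eq_square algebra_simps)

lemma leaning_box_system_iff:
  fixes u s2 s3 s4 :: real
  assumes "sin (2 * \<alpha>) \<noteq> 0" and "omega_p \<alpha> \<noteq> 0"
    and "s2 \<noteq> 0" and "s3 \<noteq> 0" and "s4 \<noteq> 0"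
  shows "(s2 * s3 = omega_m \<alpha> \<and> s2 * s3 = (s3 * s4) * omega_p \<alpha> \<and>
          s2 * omega_p \<alpha> = 2 * u * omega_m \<alpha> + s4)
     \<longleftrightarrow> (s2 = 2 * u * cot (2 * \<alpha>) \<and> s3 = omega_m \<alpha> / s2 \<and> s4 = s2 / omega_p \<alpha>)"
proof -
  have first: "s2 * s3 = omega_m \<alpha> \<longleftrightarrow> s3 = omega_m \<alpha> / s2"
    using assms by (auto simp: field_simps)
  have second: "s2 * s3 = (s3 * s4) * omega_p \<alpha> \<longleftrightarrow> s4 = s2 / omega_p \<alpha>"
    using assms by (auto simp: field_simps)
  have third: "s2 * omega_p \<alpha> = 2 * u * omega_m \<alpha> + s4 \<longleftrightarrow> s2 = 2 * u * cot (2 * \<alpha>)"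
    if s4: "s4 = s2 / omega_p \<alpha>"
  proof -
    have "s2 * omega_p \<alpha> = 2 * u * omega_m \<alpha> + s4
        \<longleftrightarrow> s2 * ((omega_p \<alpha>)^2 - 1) = 2 * u * (omega_m \<alpha> * omega_p \<alpha>)"
      using assms unfolding s4 by (auto simp: field_simps power2_eq_square)
    also have "\<dots> \<longleftrightarrow> s2 * sin (2 * \<alpha>) = 2 * u * cos (2 * \<alpha>)"
      by (simp add: omega_p_squared omega_m_mult_omega_p)
    also have "\<dots> \<longleftrightarrow> s2 = 2 * u * cot (2 * \<alpha>)"
      using assms by (auto simp: cot_def field_simps)
    finally show ?thesis .
  qed
  show ?thesis using first second third by blast
qed

lemma uf_sum_squares_identity:
  fixes wp wm s2 u :: real
  assumes "wp \<noteq> 0" and "wm \<noteq> 0" and "s2 \<noteq> 0"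
    and "wp^2 + wm^2 = 2" and "s2 * (wp^2 - 1) = 2 * u * wm * wp"
  shows "2 * u^2 + 2 * (uf s2)^2 = (uf (wm / s2))^2 + (uf (s2 / wp))^2"
proof -
  have u: "u = s2 * (wp^2 - 1) / (2 * wm * wp)" using assms by (simp add: field_simps)
  show ?thesis using assms unfolding u uf_def
    by (simp add: field_simps power2_eq_square) algebra
qed

lemma leaning_box_face_identity:
  fixes u \<alpha> :: real
  defines "s2 \<equiv> 2 * u * cot (2 * \<alpha>)"
  assumes "omega_p \<alpha> \<noteq> 0" and "omega_m \<alpha> \<noteq> 0" and "s2 \<noteq> 0"
  shows "2 * u^2 + 2 * (uf s2)^2 = (uf (omega_m \<alpha> / s2))^2 + (uf (s2 / omega_p \<alpha>))^2"
proof (rule uf_sum_squares_identity)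
  have "sin (2 * \<alpha>) \<noteq> 0" \<comment> \<open>otherwise \<open>cot (2 * \<alpha>) = 0\<close>\<close>
    using assms(4) by (auto simp: s2_def cot_def)
  then show "s2 * ((omega_p \<alpha>)^2 - 1) = 2 * u * omega_m \<alpha> * omega_p \<alpha>"
    using omega_m_mult_omega_p[of \<alpha>] by (simp add: s2_def omega_p_squared cot_def field_simps)
  show "(omega_p \<alpha>)^2 + (omega_m \<alpha>)^2 = 2"
    by (simp add: omega_p_squared omega_m_squared)
qed (use assms in auto)

lemma scaled_rational_pythagorean_triples:
  fixes s :: "real list"
  assumes "\<forall>q\<in>set s. q \<in> \<rat> \<and> 0 < q \<and> q < 1"
  shows "\<forall>k < length s. uf (s ! k) \<in> \<rat> \<and> 0 < uf (s ! k) \<and> vf (s ! k) \<in> \<rat> \<and>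
           0 < vf (s ! k) \<and> 1 + (uf (s ! k))^2 = (vf (s ! k))^2"
    and "\<exists>x::nat. 0 < x \<and> (\<forall>k < length s. real x * uf (s ! k) \<in> \<int> \<and> real x * vf (s ! k) \<in> \<int>)"
proof -
  show "\<forall>k < length s. uf (s ! k) \<in> \<rat> \<and> 0 < uf (s ! k) \<and> vf (s ! k) \<in> \<rat> \<and>
          0 < vf (s ! k) \<and> 1 + (uf (s ! k))^2 = (vf (s ! k))^2"
    using assms by (auto simp: all_set_conv_all_nth uf_Rats vf_Rats uf_pos vf_pos one_plus_uf_squared)
  have "uf ` set s \<union> vf ` set s \<subseteq> \<rat>" using assms by (auto simp: uf_Rats vf_Rats)
  then obtain x :: nat where "0 < x" "\<forall>q \<in> uf ` set s \<union> vf ` set s. real x * q \<in> \<int>"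
    using Rats_common_denominator by (metis finite_Un finite_imageI finite_set)
  then show "\<exists>x::nat. 0 < x \<and> (\<forall>k < length s. real x * uf (s ! k) \<in> \<int> \<and> real x * vf (s ! k) \<in> \<int>)"
    by (auto simp: all_set_conv_all_nth[symmetric])
qed

lemma scaled_pythagorean:
  fixes t a b :: real
  assumes "1 + a^2 = b^2"
  shows "t^2 + (t * a)^2 = (t * b)^2"
proof -
  have "t^2 * (1 + a^2) = t^2 * b^2" using assms by simp
  then show ?thesis by (simp add: power_mult_distrib algebra_simps)
qed

lemma scaled_face_identity:
  fixes t a b c d :: real
  assumes "2 * a^2 + 2 * b^2 = c^2 + d^2"
  shows "2 * (t * a)^2 + 2 * (t * b)^2 = (t * c)^2 + (t * d)^2"
proof -
  have "t^2 * (2 * a^2 + 2 * b^2) = t^2 * (c^2 + d^2)" using assms by simp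
  then show ?thesis by (simp add: power_mult_distrib algebra_simps)
qed

lemma leaning_box_of_parameters:
  fixes s1 s2 s3 s4 :: real
  defines "s \<equiv> [s1, s2, s3, s4]"
  assumes params: "\<forall>q\<in>set s. q \<in> \<rat> \<and> 0 < q \<and> q < 1"
    and face: "2 * (uf s1)^2 + 2 * (uf s2)^2 = (uf s3)^2 + (uf s4)^2"
  shows "(\<forall>k < 4. uf (s ! k) \<in> \<rat> \<and> 0 < uf (s ! k) \<and> vf (s ! k) \<in> \<rat> \<and>
            0 < vf (s ! k) \<and> 1 + (uf (s ! k))^2 = (vf (s ! k))^2) \<and>
         2 * (uf s1)^2 + 2 * (uf s2)^2 = (uf s3)^2 + (uf s4)^2 \<and>
         (\<exists>x :: nat. x > 0 \<and>
            (\<forall>k < 4. real x * uf (s ! k) \<in> \<int> \<and> real x * vf (s ! k) \<in> \<int>) \<and>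
            (real x)^2 + (real x * uf s1)^2 = (real x * vf s1)^2 \<and>
            (real x)^2 + (real x * uf s2)^2 = (real x * vf s2)^2 \<and>
            (real x)^2 + (real x * uf s3)^2 = (real x * vf s3)^2 \<and>
            (real x)^2 + (real x * uf s4)^2 = (real x * vf s4)^2 \<and>
            2 * (real x * uf s1)^2 + 2 * (real x * uf s2)^2
              = (real x * uf s3)^2 + (real x * uf s4)^2)"
proof -
  have len: "length s = 4" by (simp add: s_def)
  note triples = scaled_rational_pythagorean_triples[OF params, unfolded len]
  then obtain x :: nat
    where x: "0 < x" "\<forall>k < 4. real x * uf (s ! k) \<in> \<int> \<and> real x * vf (s ! k) \<in> \<int>"
    by blast
  have "(real x)^2 + (real x * uf q)^2 = (real x * vf q)^2" if "q \<in> set s" for q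
    using params that by (auto intro!: scaled_pythagorean one_plus_uf_squared)
  then have pyth: "(real x)^2 + (real x * uf s1)^2 = (real x * vf s1)^2"
    "(real x)^2 + (real x * uf s2)^2 = (real x * vf s2)^2"
    "(real x)^2 + (real x * uf s3)^2 = (real x * vf s3)^2"
    "(real x)^2 + (real x * uf s4)^2 = (real x * vf s4)^2"
    by (simp_all add: s_def)
  show ?thesis
    by (intro conjI exI[of _ x] triples(1) face scaled_face_identity[OF face] x(1) x(2) pyth)
qed

theorem theorem1:
  fixes s1 m \<alpha> :: real
  assumes s1_rat: "s1 \<in> \<rat>" and s1_pos: "0 < s1" and s1_lt: "s1 < 1"
    and m_rat: "m \<in> \<rat>" and m_pos: "0 < m" and m_lt: "m < sqrt 2 - 1"
    and alpha_pos: "0 < \<alpha>" and alpha_lt: "\<alpha> < pi / 4"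
    and alpha_gen: "generator \<alpha> = m"
  shows
    "(\<forall>s2 s3 s4 :: real. s2 \<noteq> 0 \<longrightarrow> s3 \<noteq> 0 \<longrightarrow> s4 \<noteq> 0 \<longrightarrow>
       ((s2 * s3 = omega_m \<alpha> \<and> s2 * s3 = (s3 * s4) * omega_p \<alpha> \<and>
         s2 * omega_p \<alpha> = 2 * uf s1 * omega_m \<alpha> + s4)
        \<longleftrightarrow>
        (s2 = 2 * uf s1 * cot (2 * \<alpha>) \<and> s3 = omega_m \<alpha> / s2 \<and> s4 = s2 / omega_p \<alpha>))) \<and>
    (let s2 = 2 * uf s1 * cot (2 * \<alpha>);
         s3 = omega_m \<alpha> / s2;
         s4 = s2 / omega_p \<alpha>;
         s = [s1, s2, s3, s4]
     in (0 < s2 \<and> s2 < 1 \<and> 0 < s3 \<and> s3 < 1 \<and> 0 < s4 \<and> s4 < 1) \<longrightarrow>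
        ((\<forall>k < 4. uf (s ! k) \<in> \<rat> \<and> 0 < uf (s ! k) \<and>
                   vf (s ! k) \<in> \<rat> \<and> 0 < vf (s ! k) \<and>
                   1 + (uf (s ! k))^2 = (vf (s ! k))^2) \<and>
         2 * (uf s1)^2 + 2 * (uf s2)^2 = (uf s3)^2 + (uf s4)^2 \<and>
         (\<exists>x :: nat. x > 0 \<and>
            (\<forall>k < 4. real x * uf (s ! k) \<in> \<int> \<and> real x * vf (s ! k) \<in> \<int>) \<and>
            (let y = real x * uf s1; z = real x * uf s2;
                 c1 = real x * uf s3; c2 = real x * uf s4;
                 a = real x * vf s1; b = real x * vf s2;
                 d1 = real x * vf s3; d2 = real x * vf s4
             in (real x)^2 + y^2 = a^2 \<and> (real x)^2 + z^2 = b^2 \<and>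
                (real x)^2 + c1^2 = d1^2 \<and> (real x)^2 + c2^2 = d2^2 \<and>
                2 * y^2 + 2 * z^2 = c1^2 + c2^2))))"
proof -
  have cos_pos: "0 < cos \<alpha>" and sin_pos: "0 < sin \<alpha>"
    using alpha_pos alpha_lt by (auto intro: cos_gt_zero_pi sin_gt_zero)
  have sin_double_nz: "sin (2 * \<alpha>) \<noteq> 0"
    using alpha_pos alpha_lt sin_gt_zero[of "2 * \<alpha>"] by auto
  have omega_p_nz: "omega_p \<alpha> \<noteq> 0" using cos_pos sin_pos by (simp add: omega_p_def)
  have cos_rat: "cos \<alpha> \<in> \<rat>" and sin_rat: "sin \<alpha> \<in> \<rat>"
    using cos_sin_Rats_of_generator[of \<alpha>] alpha_gen m_rat cos_pos by auto
  define s2 where "s2 = 2 * uf s1 * cot (2 * \<alpha>)"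
  have s2_rat: "s2 \<in> \<rat>"
    using s1_rat cos_rat sin_rat by (simp add: s2_def uf_Rats cot_def cos_double sin_double)
  have "omega_m \<alpha> \<in> \<rat>" "omega_p \<alpha> \<in> \<rat>"
    using cos_rat sin_rat by (simp_all add: omega_m_def omega_p_def)
  then have params: "\<forall>q\<in>set [s1, s2, omega_m \<alpha> / s2, s2 / omega_p \<alpha>]. q \<in> \<rat> \<and> 0 < q \<and> q < 1"
    if "0 < s2 \<and> s2 < 1 \<and> 0 < omega_m \<alpha> / s2 \<and> omega_m \<alpha> / s2 < 1 \<and>
        0 < s2 / omega_p \<alpha> \<and> s2 / omega_p \<alpha> < 1"
    using that s1_rat s1_pos s1_lt s2_rat by auto
  have face: "2 * (uf s1)^2 + 2 * (uf s2)^2 = (uf (omega_m \<alpha> / s2))^2 + (uf (s2 / omega_p \<alpha>))^2"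
    if "0 < s2" and "0 < omega_m \<alpha> / s2"
  proof (rule leaning_box_face_identity[of \<alpha> "uf s1", folded s2_def])
    show "omega_m \<alpha> \<noteq> 0" using that by auto
  qed (use omega_p_nz that in auto)
  show ?thesis
    unfolding Let_def s2_def[symmetric]
    apply (rule conjI)
    subgoal unfolding s2_def by (intro allI impI leaning_box_system_iff[OF sin_double_nz omega_p_nz])
    subgoal by (rule impI, rule leaning_box_of_parameters[OF params face]) simp_all
    done
qed

end
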